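(* Let $F$ be a fixed real $3\times 3$ matrix of rank two. For a symmetric $3\times 3$ matrix $\omega^*$, define $$G(\omega^* ) = \frac{1}{2}\operatorname{tr}(F\omega^*F^{\mathrm T}\omega^* )\,F - F\omega^*F^{\mathrm T}\omega^*F.$$ Regard the nine entries $(G(\omega^* ))_{ij}$, $1\le i,j\le 3$, as polynomials in the six independent entries of $\omega^*$. Then at most three of these polynomials are linearly independent (over coefficients depending only on $F$). That is, the linear span of $\{(G(\omega^* ))_{ij}\}_{i,j=1}^{3}$ has dimension at most $3$.
   Context: In the paper's application, $F$ is a fundamental matrix and $\omega^* = KK^{\mathrm T}$ for an upper-triangular camera calibration matrix $K$. The equation $G(\omega^* ) = 0_{3\times 3}$ is then a system of self-calibration constraints on the entries of $\omega^*$. *)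

theory Defs
  imports "HOL-Analysis.Analysis" "HOL-Library.Function_Algebras"
begin

definition sym_of6 :: "real^6 \<Rightarrow> real^3^3" where
  "sym_of6 x = vector [vector [x$1, x$2, x$3],
                       vector [x$2, x$4, x$5],
                       vector [x$3, x$5, x$6]]"

definition Gmap :: "real^3^3 \<Rightarrow> real^3^3 \<Rightarrow> real^3^3" where
  "Gmap F \<omega> = ((1/2) * trace (F ** \<omega> ** transpose F ** \<omega>)) *\<^sub>R F
                - F ** \<omega> ** transpose F ** \<omega> ** F"

definition fscale :: "real \<Rightarrow> ('a \<Rightarrow> real) \<Rightarrow> ('a \<Rightarrow> real)" where
  "fscale c f = (\<lambda>x. c * f x)"

end

theory Submission
  imports Defs
begin

text \<open>A rank-two F factors as F = C D with C of size 3x2 and D of size 2x3.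
  Then G(w) = C Y(w) D, where Y = 1/2 tr(M) I - M for the 2x2 matrix
  M = (D w D^T)(C^T w C), since tr(F w F^T w) = tr M by cyclicity of the trace.
  As Y is traceless, every entry of G is a linear combination, with coefficients
  depending on C and D only, of the three polynomials Y_11, Y_12 and Y_21.\<close>

lemma matrix_factor_through_rank:
  fixes F :: "real^'n^'m"
  assumes "rank F \<le> CARD('k)"
  obtains C :: "real^'k^'m" and D :: "real^'n^'k" where "F = C ** D"
proof -
  obtain B where B: "B \<subseteq> rows F" "independent B" "rows F \<subseteq> span B" "card B = rank F"
    using basis_exists[of "rows F"] by (auto simp: row_rank_def)
  obtain K :: "'k set" where "card K = card B"
    using assms B(4) obtain_subset_with_card_n by metis
  moreover have "finite B" using B(2) finiteI_independent by blast
  ultimately obtain b where b: "bij_betw b K B"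
    by (metis finite_same_card_bij finite)
  have "\<exists>u. F $ i = (\<Sum>v\<in>B. u v *\<^sub>R v)" for i
  proof -
    have "F $ i \<in> span B" using B(3) by (auto simp: rows_def row_def)
    then show ?thesis using span_finite[OF \<open>finite B\<close>] by auto
  qed
  then obtain u where u: "\<And>i. F $ i = (\<Sum>v\<in>B. u i v *\<^sub>R v)" by metis
  define C :: "real^'k^'m" where "C = (\<chi> i k. if k \<in> K then u i (b k) else 0)"
  define D :: "real^'n^'k" where "D = (\<chi> k. if k \<in> K then b k else 0)"
  have "F $ i $ j = (C ** D) $ i $ j" for i j
  proof -
    have "F $ i $ j = (\<Sum>v\<in>B. u i v * v $ j)" by (simp add: u sum_component)
    also have "\<dots> = (\<Sum>k\<in>K. u i (b k) * b k $ j)"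
      by (rule sum.reindex_bij_betw[OF b, symmetric])
    also have "\<dots> = (\<Sum>k\<in>UNIV. C $ i $ k * D $ k $ j)"
      by (rule sum.mono_neutral_cong_left) (auto simp: C_def D_def)
    finally show ?thesis by (simp add: matrix_matrix_mult_def)
  qed
  then have "F = C ** D" by (simp add: vec_eq_iff)
  then show ?thesis by (rule that)
qed

lemma matrix_diff_ldistrib: "(A::'a::ring_1^'n^'m) ** (B - C) = A ** B - A ** C"
  by (simp add: matrix_matrix_mult_def vec_eq_iff sum_subtractf algebra_simps)

lemma matrix_diff_rdistrib: "((A::'a::ring_1^'n^'m) - B) ** C = A ** C - B ** C"
  by (simp add: matrix_matrix_mult_def vec_eq_iff sum_subtractf algebra_simps)

lemma Gmap_matrix_mult:
  fixes C :: "real^'k^3" and D :: "real^3^'k" and \<omega> :: "real^3^3"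
  assumes M: "M = (D ** \<omega> ** transpose D) ** (transpose C ** \<omega> ** C)"
  shows "Gmap (C ** D) \<omega> = C ** ((1/2 * trace M) *\<^sub>R mat 1 - M) ** D"
proof -
  have "trace (C ** D ** \<omega> ** transpose (C ** D) ** \<omega>)
      = trace (C ** (D ** \<omega> ** transpose D ** transpose C ** \<omega>))"
    unfolding matrix_transpose_mul matrix_mul_assoc ..
  also have "\<dots> = trace ((D ** \<omega> ** transpose D ** transpose C ** \<omega>) ** C)"
    by (rule trace_mul_sym)
  also have "\<dots> = trace M"
    unfolding M matrix_mul_assoc ..
  finally have trace_eq: "trace (C ** D ** \<omega> ** transpose (C ** D) ** \<omega>) = trace M" .
  have product_eq: "C ** D ** \<omega> ** transpose (C ** D) ** \<omega> ** (C ** D) = C ** M ** D"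
    unfolding M matrix_transpose_mul matrix_mul_assoc ..
  show ?thesis
    unfolding Gmap_def trace_eq product_eq matrix_diff_ldistrib matrix_diff_rdistrib
      matrix_scalar_ac scalar_matrix_assoc[symmetric] matrix_mul_rid ..
qed

lemma trace_scaled_identity_diff:
  fixes M :: "real^2^2"
  shows "trace ((1/2 * trace M) *\<^sub>R mat 1 - M) = 0"
  by (simp add: trace_def sum_2 mat_def field_simps)

lemma traceless_matrix_sandwich_entry:
  fixes C :: "real^2^'m" and D :: "real^'n^2" and Y :: "real^2^2"
  assumes "trace Y = 0"
  shows "(C ** Y ** D) $ i $ j = Y $ 1 $ 1 * (C$i$1 * D$1$j - C$i$2 * D$2$j)
            + Y $ 1 $ 2 * (C$i$1 * D$2$j) + Y $ 2 $ 1 * (C$i$2 * D$1$j)"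
proof -
  have "Y $ 2 $ 2 = - Y $ 1 $ 1" using assms by (simp add: trace_def sum_2)
  then show ?thesis by (simp add: matrix_matrix_mult_def sum_2 algebra_simps)
qed

lemma vector_space_fscale: "vector_space fscale"
  by unfold_locales (auto simp: fscale_def algebra_simps fun_eq_iff)

lemma traceless_sandwich_entry_in_span:
  fixes C :: "real^2^'m" and D :: "real^'n^2" and Y :: "'a \<Rightarrow> real^2^2"
  assumes "\<And>x. trace (Y x) = 0"
  shows "(\<lambda>x. (C ** Y x ** D) $ i $ j)
           \<in> module.span fscale {\<lambda>x. Y x $ 1 $ 1, \<lambda>x. Y x $ 1 $ 2, \<lambda>x. Y x $ 2 $ 1}"
proof -
  interpret vector_space fscale by (rule vector_space_fscale)
  have "(\<lambda>x. (C ** Y x ** D) $ i $ j) =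
      fscale (C$i$1 * D$1$j - C$i$2 * D$2$j) (\<lambda>x. Y x $ 1 $ 1)
      + fscale (C$i$1 * D$2$j) (\<lambda>x. Y x $ 1 $ 2) + fscale (C$i$2 * D$1$j) (\<lambda>x. Y x $ 2 $ 1)"
    by (simp add: fun_eq_iff traceless_matrix_sandwich_entry[OF assms] fscale_def algebra_simps)
  then show ?thesis
    by (simp only:) (intro span_add span_scale span_base; simp)
qed

theorem proposition3:
  fixes F :: "real^3^3"
  assumes "rank F = 2"
  shows "vector_space.dim fscale
           (module.span fscale {(\<lambda>x. Gmap F (sym_of6 x) $ i $ j) | i j. True}) \<le> 3"
proof -
  interpret vector_space fscale by (rule vector_space_fscale)
  obtain C :: "real^2^3" and D :: "real^3^2" where F: "F = C ** D"
    using matrix_factor_through_rank[where 'k = 2 and F = F] assms by auto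
  define Y where "Y x = (let M = (D ** sym_of6 x ** transpose D) ** (transpose C ** sym_of6 x ** C)
                         in (1/2 * trace M) *\<^sub>R mat 1 - M)" for x
  have G: "Gmap F (sym_of6 x) = C ** Y x ** D" for x
    unfolding F Y_def Let_def by (rule Gmap_matrix_mult) simp
  have traceless: "trace (Y x) = 0" for x
    unfolding Y_def Let_def by (rule trace_scaled_identity_diff)
  let ?B = "{\<lambda>x. Y x $ 1 $ 1, \<lambda>x. Y x $ 1 $ 2, \<lambda>x. Y x $ 2 $ 1}"
  have "{(\<lambda>x. Gmap F (sym_of6 x) $ i $ j) | i j. True} \<subseteq> span ?B"
    unfolding G using traceless_sandwich_entry_in_span[of Y C D, OF traceless] by blast
  then have "dim (span {(\<lambda>x. Gmap F (sym_of6 x) $ i $ j) | i j. True}) \<le> card ?B"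
    by (intro dim_le_card span_minimal subspace_span) auto
  also have "\<dots> \<le> 3" by (simp add: card_insert_le_m1)
  finally show ?thesis .
qed

end
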